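(* Let $\mathcal{T}$ be a tower with $\mathbb{K}_0=\emptyset$ whose maps are elementary inclusions or elementary contractions (named by the naming convention below), of dimension $\Delta$ and with $n$ elementary inclusions; let $\mathcal{W}$ be its contracting forest with node costs $c$. Then every ascending path in $\mathcal{W}$ with endpoint $x$ has cost at most $2\cdot|E(x)|$, and every independent set of ascending paths in $\mathcal{W}$ has cost at most $2\cdot(\Delta+1)\cdot n$.
   Context: Elementary inclusion: $\mathbb{K}_{i+1}=\mathbb{K}_i\cup\{\sigma\}$, $\sigma\notin\mathbb{K}_i$. Elementary contraction of distinct vertices $u,v$: for one of them, say $v$, the vertex set of $\mathbb{K}_{i+1}$ is that of $\mathbb{K}_i$ minus $v$, $\phi_i(u)=\phi_i(v)=u$, identity elsewhere, $\mathbb{K}_{i+1}=\phi_i(\mathbb{K}_i)$. Dimension = maximal simplex dimension. Active small coning construction: $\hat{\mathbb{K}}_0=\emptyset$; vertices flagged active/inactive, simplex active iff all its vertices are; $\mathrm{Act}\overline{\mathrm{St}}(w,\hat{\mathbb{K}}_i)$ = active simplices of $\hat{\mathbb{K}}_i$ in the closed star of $w$; inclusion adds $\sigma$ (new vertex active); contraction of $u,v$ with $|\mathrm{Act}\overline{\mathrm{St}}(u,\hat{\mathbb{K}}_i)|\le|\mathrm{Act}\overline{\mathrm{St}}(v,\hat{\mathbb{K}}_i)|$ sets $\hat{\mathbb{K}}_{i+1}=\hat{\mathbb{K}}_i\cup\{\{v\}\cup\tau:\tau\in\mathrm{Act}\overline{\mathrm{St}}(u,\hat{\mathbb{K}}_i)\}$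 and marks $u$ inactive (symmetric otherwise). Naming convention: each contraction maps $u,v$ to the vertex not marked inactive. Contracting forest $\mathcal{W}$: start empty; a vertex inclusion of $w$ adds a single-node tree labeled $w$; inclusions of higher simplices change nothing; a contraction of $u,v$ makes the current roots labeled $u,v$ children of a new root labeled with the image vertex. An internal node $x$ corresponding to contraction $\phi_i$ has cost $c(x)=|\hat{\mathbb{K}}_{i+1}\setminus\hat{\mathbb{K}}_i|$; leaves cost $0$. $\Sigma$: the $n$ simplices added at inclusions; each vertex of $\sigma\in\Sigma$ added by $\phi_i$ corresponds to the root of the forest after step $i$ labeled with it; $E(x)$ = those $\sigma\in\Sigma$ with a vertex whose node lies in the subtree rooted at $x$. An ascending path $(x_1,\dots,x_L)$, $L\ge1$, has $x_{k+1}$ the parent of $x_k$; $x_L$ is its endpoint; its cost is the sum of costs of its nodes. A set of ascending paths is independent if their endpoints are pairwise distinct and no endpoint is a proper ancestor of another; its cost is the sum of the path costs. *)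

theory Defs
  imports Main
begin

(* Vertices have an arbitrary type 'v; a simplex is a finite nonempty 'v set;
   a complex is a set of simplices. *)

datatype 'v tower_op =
    Incl "'v set"
  | Contr 'v 'v          (* Contr u v: contraction of u and v; u is marked inactive,
                            the image vertex (naming convention) is v *)

(* state after some steps: (K_i, \<hat>K_i, set of active vertices) *)
type_synonym 'v tstate = "'v set set \<times> 'v set set \<times> 'v set"

definition cplx :: "'v tstate \<Rightarrow> 'v set set" where "cplx s = fst s"
definition cone_cplx :: "'v tstate \<Rightarrow> 'v set set" where "cone_cplx s = fst (snd s)"
definition active :: "'v tstate \<Rightarrow> 'v set" where "active s = snd (snd s)"

definition closed_star :: "'v \<Rightarrow> 'v set set \<Rightarrow> 'v set set" where
  "closed_star w L = {\<tau> \<in> L. \<exists>\<rho>\<in>L. w \<in> \<rho> \<and> \<tau> \<subseteq> \<rho>}"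

definition act_star :: "'v \<Rightarrow> 'v tstate \<Rightarrow> 'v set set" where
  "act_star w s = {\<tau> \<in> closed_star w (cone_cplx s). \<tau> \<subseteq> active s}"

definition vertex_map :: "'v \<Rightarrow> 'v \<Rightarrow> 'v \<Rightarrow> 'v" where
  "vertex_map u v x = (if x = u then v else x)"

fun tstep :: "'v tstate \<Rightarrow> 'v tower_op \<Rightarrow> 'v tstate" where
  "tstep s (Incl \<sigma>) =
     (cplx s \<union> {\<sigma>}, cone_cplx s \<union> {\<sigma>},
      if card \<sigma> = 1 then active s \<union> \<sigma> else active s)"
| "tstep s (Contr u v) =
     ((\<lambda>\<tau>. vertex_map u v ` \<tau>) ` cplx s,
      cone_cplx s \<union> {insert v \<tau> | \<tau>. \<tau> \<in> act_star u s},
      active s - {u})"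

definition init_state :: "'v tstate" where "init_state = ({}, {}, {})"

(* state before step i (i.e. K_i, \<hat>K_i, flags), steps numbered 0,1,... *)
definition state_at :: "'v tower_op list \<Rightarrow> nat \<Rightarrow> 'v tstate" where
  "state_at ops i = fold (\<lambda>op s. tstep s op) (take i ops) init_state"

definition is_vertex :: "'v \<Rightarrow> 'v set set \<Rightarrow> bool" where
  "is_vertex w K \<longleftrightarrow> {w} \<in> K"

(* validity of a step: elementary inclusion into a simplicial complex (fresh vertex
   names), or elementary contraction of distinct vertices, where the removed
   vertex u has the (weakly) smaller active closed star *)
fun valid_step :: "'v tstate \<Rightarrow> 'v tower_op \<Rightarrow> bool" where
  "valid_step s (Incl \<sigma>) \<longleftrightarrow>
     finite \<sigma> \<and> \<sigma> \<noteq> {} \<and> \<sigma> \<notin> cplx s \<and>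
     (\<forall>\<tau>. \<tau> \<noteq> {} \<and> \<tau> \<subset> \<sigma> \<longrightarrow> \<tau> \<in> cplx s) \<and>
     (card \<sigma> = 1 \<longrightarrow> \<sigma> \<inter> \<Union>(cone_cplx s) = {})"
| "valid_step s (Contr u v) \<longleftrightarrow>
     u \<noteq> v \<and> is_vertex u (cplx s) \<and> is_vertex v (cplx s) \<and>
     card (act_star u s) \<le> card (act_star v s)"

definition valid_tower :: "'v tower_op list \<Rightarrow> bool" where
  "valid_tower ops \<longleftrightarrow> (\<forall>i < length ops. valid_step (state_at ops i) (ops ! i))"

definition is_incl :: "'v tower_op \<Rightarrow> bool" where
  "is_incl op \<longleftrightarrow> (\<exists>\<sigma>. op = Incl \<sigma>)"

definition num_incl :: "'v tower_op list \<Rightarrow> nat" where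
  "num_incl ops = length (filter is_incl ops)"

definition tower_dim :: "'v tower_op list \<Rightarrow> nat" where
  "tower_dim ops = Max ({0} \<union> (\<Union>i \<in> {0..length ops}.
       (\<lambda>\<sigma>. card \<sigma> - 1) ` cplx (state_at ops i)))"

(* ---- contracting forest ----
   Nodes are identified with the index of the step creating them: a vertex inclusion
   creates a leaf, a contraction creates an internal node. *)

definition is_node :: "'v tower_op list \<Rightarrow> nat \<Rightarrow> bool" where
  "is_node ops i \<longleftrightarrow> i < length ops \<and>
     ((\<exists>w. ops ! i = Incl {w}) \<or> (\<exists>u v. ops ! i = Contr u v))"

fun root_upd :: "nat \<Rightarrow> ('v \<Rightarrow> nat) \<Rightarrow> 'v tower_op \<Rightarrow> ('v \<Rightarrow> nat)" where
  "root_upd i r (Incl \<sigma>) = (if card \<sigma> = 1 then r(the_elem \<sigma> := i) else r)"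
| "root_upd i r (Contr u v) = r(v := i)"

(* roots_at ops i w: the root labelled w of the forest after steps 0..i-1 *)
fun roots_at :: "'v tower_op list \<Rightarrow> nat \<Rightarrow> 'v \<Rightarrow> nat" where
  "roots_at ops 0 = (\<lambda>_. 0)"
| "roots_at ops (Suc i) = root_upd i (roots_at ops i) (ops ! i)"

definition parent :: "'v tower_op list \<Rightarrow> nat \<Rightarrow> nat \<Rightarrow> bool" where
  "parent ops j i \<longleftrightarrow> is_node ops j \<and> i < length ops \<and>
     (\<exists>u v. ops ! i = Contr u v \<and> (j = roots_at ops i u \<or> j = roots_at ops i v))"

definition parent_rel :: "'v tower_op list \<Rightarrow> (nat \<times> nat) set" where
  "parent_rel ops = {(j, i). parent ops j i}"

definition subtree :: "'v tower_op list \<Rightarrow> nat \<Rightarrow> nat set" where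
  "subtree ops x = {y. (y, x) \<in> (parent_rel ops)\<^sup>*}"

definition proper_ancestor :: "'v tower_op list \<Rightarrow> nat \<Rightarrow> nat \<Rightarrow> bool" where
  "proper_ancestor ops y x \<longleftrightarrow> (x, y) \<in> (parent_rel ops)\<^sup>+"

definition node_cost :: "'v tower_op list \<Rightarrow> nat \<Rightarrow> nat" where
  "node_cost ops i = (if i < length ops \<and> (\<exists>u v. ops ! i = Contr u v)
      then card (cone_cplx (state_at ops (Suc i)) - cone_cplx (state_at ops i)) else 0)"

(* E(x), with \<Sigma> indexed by the inclusion steps *)
definition E_set :: "'v tower_op list \<Rightarrow> nat \<Rightarrow> nat set" where
  "E_set ops x = {i. i < length ops \<and> (\<exists>\<sigma>. ops ! i = Incl \<sigma> \<and>
      (\<exists>w\<in>\<sigma>. roots_at ops (Suc i) w \<in> subtree ops x))}"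

definition asc_path :: "'v tower_op list \<Rightarrow> nat list \<Rightarrow> bool" where
  "asc_path ops xs \<longleftrightarrow> xs \<noteq> [] \<and> (\<forall>x \<in> set xs. is_node ops x) \<and>
     (\<forall>k. Suc k < length xs \<longrightarrow> parent ops (xs ! k) (xs ! Suc k))"

definition path_cost :: "'v tower_op list \<Rightarrow> nat list \<Rightarrow> nat" where
  "path_cost ops xs = sum_list (map (node_cost ops) xs)"

definition independent_paths :: "'v tower_op list \<Rightarrow> nat list set \<Rightarrow> bool" where
  "independent_paths ops P \<longleftrightarrow> (\<forall>p \<in> P. asc_path ops p) \<and> inj_on last P \<and>
     (\<forall>p \<in> P. \<forall>q \<in> P. p \<noteq> q \<longrightarrow> \<not> proper_ancestor ops (last p) (last q))"

end

theory Submission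
  imports Defs
begin

text \<open>
  The construction keeps \<open>\<hat>K\<^sub>i\<close> a simplicial complex whose active part is \<open>K\<^sub>i\<close>.
  Contracting \<open>u\<close> into \<open>v\<close> adds at most \<open>|ActSt(u) - ActSt(v)|\<close> simplices to the cone, and since
  \<open>u\<close> has the smaller active star this is also at most \<open>|ActSt(v) - ActSt(u)|\<close>. Each of these
  differences is at most twice the number of simplices of \<open>K\<^sub>i\<close> containing the first vertex but
  not the second, and each such simplex is the image of a distinct inclusion that lies in \<open>E\<close> of
  the first vertex's root but not of the second's, because the subtrees of distinct roots are
  disjoint. Hence a contraction node \<open>x\<close> costs at most \<open>2 |E(x) - E(c)|\<close> for either child \<open>c\<close>, and
  these bounds telescope along an ascending path. For independent paths, an inclusion \<open>\<sigma>\<close>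
  lies in \<open>E(x)\<close> for at most one endpoint \<open>x\<close> above each vertex of \<open>\<sigma>\<close>, since endpoints above a
  common node are comparable; so double counting gives the bound \<open>2 (\<Delta> + 1) n\<close>.
\<close>

lemma state_at_Suc:
  "t < length ops \<Longrightarrow> state_at ops (Suc t) = tstep (state_at ops t) (ops ! t)"
  by (simp add: state_at_def take_Suc_conv_app_nth)

lemma tstep_Incl:
  "cplx (tstep s (Incl \<sigma>)) = cplx s \<union> {\<sigma>}"
  "cone_cplx (tstep s (Incl \<sigma>)) = cone_cplx s \<union> {\<sigma>}"
  "active (tstep s (Incl \<sigma>)) = (if card \<sigma> = 1 then active s \<union> \<sigma> else active s)"
  by (simp_all add: cplx_def cone_cplx_def active_def)

lemma tstep_Contr:
  "cplx (tstep s (Contr u v)) = (\<lambda>\<tau>. vertex_map u v ` \<tau>) ` cplx s"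
  "cone_cplx (tstep s (Contr u v)) = cone_cplx s \<union> insert v ` act_star u s"
  "active (tstep s (Contr u v)) = active s - {u}"
  by (auto simp: cplx_def cone_cplx_def active_def)

declare tstep.simps [simp del]

definition face_closed :: "'v set set \<Rightarrow> bool" where
  "face_closed C \<longleftrightarrow> (\<forall>\<rho>\<in>C. \<forall>\<tau>. \<tau> \<subseteq> \<rho> \<and> \<tau> \<noteq> {} \<longrightarrow> \<tau> \<in> C)"

lemma face_closedD: "face_closed C \<Longrightarrow> \<rho> \<in> C \<Longrightarrow> \<tau> \<subseteq> \<rho> \<Longrightarrow> \<tau> \<noteq> {} \<Longrightarrow> \<tau> \<in> C"
  unfolding face_closed_def by blast

definition coherent_state :: "'v tstate \<Rightarrow> bool" where
  "coherent_state s \<longleftrightarrow> finite (cone_cplx s) \<and> {} \<notin> cone_cplx s \<and> face_closed (cone_cplx s) \<and>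
     cplx s = {\<tau> \<in> cone_cplx s. \<tau> \<subseteq> active s} \<and> active s = {a. {a} \<in> cplx s}"

lemma coherent_stateD:
  assumes "coherent_state s"
  shows "finite (cone_cplx s)" "{} \<notin> cone_cplx s" "face_closed (cone_cplx s)"
    "cplx s = {\<tau> \<in> cone_cplx s. \<tau> \<subseteq> active s}" "active s = {a. {a} \<in> cplx s}"
  using assms unfolding coherent_state_def by blast+

lemma coherent_init_state: "coherent_state init_state"
  by (simp add: coherent_state_def face_closed_def init_state_def cplx_def cone_cplx_def active_def)

lemma act_star_iff:
  "\<tau> \<in> act_star w s \<longleftrightarrow>
     \<tau> \<in> cone_cplx s \<and> (\<exists>\<rho>\<in>cone_cplx s. w \<in> \<rho> \<and> \<tau> \<subseteq> \<rho>) \<and> \<tau> \<subseteq> active s"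
  by (auto simp: act_star_def closed_star_def)

lemma act_star_subset: "act_star w s \<subseteq> cone_cplx s"
  by (auto simp: act_star_iff)

lemma face_closed_Un_singleton:
  assumes "face_closed C" and "\<And>\<tau>. \<tau> \<noteq> {} \<Longrightarrow> \<tau> \<subset> \<sigma> \<Longrightarrow> \<tau> \<in> C"
  shows "face_closed (C \<union> {\<sigma>})"
  unfolding face_closed_def
proof (intro ballI allI impI)
  fix \<rho> \<tau> assume \<rho>: "\<rho> \<in> C \<union> {\<sigma>}" and \<tau>: "\<tau> \<subseteq> \<rho> \<and> \<tau> \<noteq> {}"
  show "\<tau> \<in> C \<union> {\<sigma>}"
  proof (cases "\<rho> \<in> C")
    case True
    then show ?thesis using face_closedD[OF assms(1) True] \<tau> by blast
  next
    case False
    then have "\<tau> = \<sigma> \<or> \<tau> \<subset> \<sigma>" using \<rho> \<tau> by blast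
    then show ?thesis using assms(2) \<tau> by blast
  qed
qed

lemma coherent_Incl:
  assumes "coherent_state s" and "valid_step s (Incl \<sigma>)"
  shows "coherent_state (tstep s (Incl \<sigma>))"
proof -
  let ?C = "cone_cplx s" and ?K = "cplx s" and ?A = "active s"
  let ?A' = "if card \<sigma> = 1 then ?A \<union> \<sigma> else ?A"
  note cl = coherent_stateD(3)[OF assms(1)]
    and K = coherent_stateD(4)[OF assms(1)] and A = coherent_stateD(5)[OF assms(1)]
  have faces: "\<tau> \<in> ?K" if "\<tau> \<noteq> {}" "\<tau> \<subset> \<sigma>" for \<tau>
    using assms(2) that by simp
  have "face_closed (?C \<union> {\<sigma>})"
    using face_closed_Un_singleton[OF cl] faces K by blast
  moreover have "?K \<union> {\<sigma>} = {\<tau> \<in> ?C \<union> {\<sigma>}. \<tau> \<subseteq> ?A'} \<and> ?A' = {a. {a} \<in> ?K \<union> {\<sigma>}}"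
  proof (cases "card \<sigma> = 1")
    case True
    then obtain w where w: "\<sigma> = {w}" by (auto simp: card_Suc_eq)
    \<comment> \<open>the new vertex is fresh, so it lies in no old simplex of the cone\<close>
    then have "w \<notin> \<Union>?C" using assms(2) by simp
    then have "?K \<union> {\<sigma>} = {\<tau> \<in> ?C \<union> {\<sigma>}. \<tau> \<subseteq> ?A \<union> \<sigma>}"
      using w K by auto
    moreover have "?A \<union> \<sigma> = {a. {a} \<in> ?K \<union> {\<sigma>}}"
      using w A by auto
    moreover have "?A' = ?A \<union> \<sigma>" using True by simp
    ultimately show ?thesis by (simp only:)
  next
    case False
    then have "{x} \<subset> \<sigma>" if "x \<in> \<sigma>" for x using that by auto
    then have "\<sigma> \<subseteq> ?A" using faces A by blast
    then have "?K \<union> {\<sigma>} = {\<tau> \<in> ?C \<union> {\<sigma>}. \<tau> \<subseteq> ?A}"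
      using K by auto
    moreover have "?A = {a. {a} \<in> ?K \<union> {\<sigma>}}"
      using A False by auto
    moreover have "?A' = ?A" using False by simp
    ultimately show ?thesis by (simp only:)
  qed
  moreover have "finite (?C \<union> {\<sigma>})" "{} \<notin> ?C \<union> {\<sigma>}"
    using assms(2) coherent_stateD(1,2)[OF assms(1)] by auto
  ultimately show ?thesis
    unfolding coherent_state_def tstep_Incl by blast
qed

lemma face_closed_act_star:
  assumes "face_closed (cone_cplx s)"
  shows "face_closed (act_star w s)"
  unfolding face_closed_def
proof (intro ballI allI impI)
  fix \<rho> \<tau> assume "\<rho> \<in> act_star w s" "\<tau> \<subseteq> \<rho> \<and> \<tau> \<noteq> {}"
  then show "\<tau> \<in> act_star w s"
    using face_closedD[OF assms] unfolding act_star_iff by (meson subset_trans)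
qed

lemma image_vertex_map:
  "vertex_map u v ` \<rho> = (if u \<in> \<rho> then insert v (\<rho> - {u}) else \<rho>)"
  by (auto simp: vertex_map_def)

lemma face_closed_Contr:
  assumes "coherent_state s" and "{v} \<in> cone_cplx s"
  shows "face_closed (cone_cplx (tstep s (Contr u v)))"
  unfolding face_closed_def tstep_Contr
proof (intro ballI allI impI)
  note C = coherent_stateD(3)[OF assms(1)]
  then have S: "face_closed (act_star u s)"
    by (rule face_closed_act_star)
  fix \<rho> \<tau> assume \<rho>: "\<rho> \<in> cone_cplx s \<union> insert v ` act_star u s" and \<tau>: "\<tau> \<subseteq> \<rho> \<and> \<tau> \<noteq> {}"
  show "\<tau> \<in> cone_cplx s \<union> insert v ` act_star u s"
  proof (cases "\<rho> \<in> cone_cplx s")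
    case True
    then show ?thesis using face_closedD[OF C True] \<tau> by blast
  next
    case False
    then obtain \<tau>0 where \<tau>0: "\<tau>0 \<in> act_star u s" "\<rho> = insert v \<tau>0" using \<rho> by blast
    consider "v \<notin> \<tau>" | "v \<in> \<tau>" "\<tau> - {v} = {}" | "v \<in> \<tau>" "\<tau> - {v} \<noteq> {}" by blast
    then show ?thesis
    proof cases
      case 1
      then have "\<tau> \<subseteq> \<tau>0" using \<tau> \<tau>0(2) by blast
      then have "\<tau> \<in> act_star u s" using face_closedD[OF S \<tau>0(1)] \<tau> by blast
      then show ?thesis using act_star_subset by (metis UnI1 subsetD)
    next
      case 2
      then have "\<tau> = {v}" by blast
      then show ?thesis using assms(2) by simp
    next
      case 3
      then have "\<tau> - {v} \<subseteq> \<tau>0" using \<tau> \<tau>0(2) by blast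
      then have "\<tau> - {v} \<in> act_star u s" using face_closedD[OF S \<tau>0(1)] 3 by blast
      moreover have "\<tau> = insert v (\<tau> - {v})" using 3 by (simp add: insert_absorb)
      ultimately show ?thesis by (metis UnI2 image_eqI)
    qed
  qed
qed

lemma valid_Contr_vertices:
  assumes "coherent_state s" and "valid_step s (Contr u v)"
  shows "u \<noteq> v" "u \<in> active s" "v \<in> active s" "{v} \<in> cone_cplx s"
proof -
  have "u \<noteq> v" "{u} \<in> cplx s" "{v} \<in> cplx s" using assms(2) by (simp_all add: is_vertex_def)
  then show "u \<noteq> v" "u \<in> active s" "v \<in> active s" "{v} \<in> cone_cplx s"
    using coherent_stateD(4,5)[OF assms(1)] by blast+
qed

lemma active_cone_Contr_in_image:
  assumes "coherent_state s" and "valid_step s (Contr u v)"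
    and \<tau>: "\<tau> \<in> cone_cplx s \<union> insert v ` act_star u s" "\<tau> \<subseteq> active s - {u}"
  shows "\<tau> \<in> (\<lambda>\<rho>. vertex_map u v ` \<rho>) ` cplx s"
proof (cases "\<tau> \<in> cone_cplx s")
  case True
  then have "\<tau> \<in> cplx s" "vertex_map u v ` \<tau> = \<tau>"
    using coherent_stateD(4)[OF assms(1)] \<tau>(2) by (auto simp: image_vertex_map)
  then show ?thesis by (metis image_eqI)
next
  case False
  then obtain \<tau>0 where \<tau>0: "\<tau>0 \<in> act_star u s" "\<tau> = insert v \<tau>0" using \<tau>(1) by blast
  have "u \<notin> \<tau>0" using \<tau>0(2) \<tau>(2) by blast
  then have image: "vertex_map u v ` insert u \<tau>0 = \<tau>" using \<tau>0(2) by (auto simp: vertex_map_def)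
  obtain \<rho>0 where "\<rho>0 \<in> cone_cplx s" "insert u \<tau>0 \<subseteq> \<rho>0" "\<tau>0 \<subseteq> active s"
    using \<tau>0(1) unfolding act_star_iff by blast
  then have "insert u \<tau>0 \<in> cone_cplx s" using face_closedD[OF coherent_stateD(3)[OF assms(1)]] by blast
  then have "insert u \<tau>0 \<in> cplx s"
    using coherent_stateD(4)[OF assms(1)] valid_Contr_vertices(2)[OF assms(1,2)] \<open>\<tau>0 \<subseteq> active s\<close> by simp
  then show ?thesis using image by (metis image_eqI)
qed

lemma image_Contr_in_active_cone:
  assumes "coherent_state s" and "valid_step s (Contr u v)" and "\<rho> \<in> cplx s"
  shows "vertex_map u v ` \<rho> \<in> cone_cplx s \<union> insert v ` act_star u s"
    "vertex_map u v ` \<rho> \<subseteq> active s - {u}"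
proof -
  note uv = valid_Contr_vertices[OF assms(1,2)]
  have \<rho>: "\<rho> \<in> cone_cplx s" "\<rho> \<subseteq> active s" using assms(3) coherent_stateD(4)[OF assms(1)] by auto
  show "vertex_map u v ` \<rho> \<subseteq> active s - {u}"
    using \<rho>(2) uv by (auto simp: vertex_map_def)
  show "vertex_map u v ` \<rho> \<in> cone_cplx s \<union> insert v ` act_star u s"
  proof (cases "u \<in> \<rho>")
    case False
    then show ?thesis using \<rho> by (simp add: image_vertex_map)
  next
    case True
    then have image: "vertex_map u v ` \<rho> = insert v (\<rho> - {u})" by (simp add: image_vertex_map)
    show ?thesis
    proof (cases "\<rho> - {u} = {}")
      case True
      then have "vertex_map u v ` \<rho> = {v}" by (simp only: image True)
      then show ?thesis using uv(4) by simp
    next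
      case False
      then have "\<rho> - {u} \<in> act_star u s"
        using \<open>u \<in> \<rho>\<close> \<rho> face_closedD[OF coherent_stateD(3)[OF assms(1)], of \<rho> "\<rho> - {u}"]
        unfolding act_star_iff by blast
      then show ?thesis unfolding image by blast
    qed
  qed
qed

lemma active_part_Contr:
  assumes "coherent_state s" and "valid_step s (Contr u v)"
  shows "{\<tau> \<in> cone_cplx (tstep s (Contr u v)). \<tau> \<subseteq> active (tstep s (Contr u v))}
           = cplx (tstep s (Contr u v))"
  unfolding tstep_Contr
proof (intro equalityI subsetI)
  fix \<tau> assume "\<tau> \<in> {\<tau> \<in> cone_cplx s \<union> insert v ` act_star u s. \<tau> \<subseteq> active s - {u}}"
  then show "\<tau> \<in> (\<lambda>\<rho>. vertex_map u v ` \<rho>) ` cplx s"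
    using active_cone_Contr_in_image[OF assms] by blast
next
  fix \<tau> assume "\<tau> \<in> (\<lambda>\<rho>. vertex_map u v ` \<rho>) ` cplx s"
  then obtain \<rho> where \<rho>: "\<rho> \<in> cplx s" and \<tau>: "\<tau> = vertex_map u v ` \<rho>" by blast
  show "\<tau> \<in> {\<tau> \<in> cone_cplx s \<union> insert v ` act_star u s. \<tau> \<subseteq> active s - {u}}"
    unfolding \<tau> mem_Collect_eq using image_Contr_in_active_cone[OF assms \<rho>] ..
qed

lemma vertices_Contr:
  assumes "coherent_state s" and "valid_step s (Contr u v)"
  shows "active (tstep s (Contr u v)) = {a. {a} \<in> cplx (tstep s (Contr u v))}"
proof -
  note K = coherent_stateD(4)[OF assms(1)] and A = coherent_stateD(5)[OF assms(1)]
  have uv: "u \<noteq> v" "v \<in> active s"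
    using valid_Contr_vertices[OF assms] by simp_all
  then have map_active: "vertex_map u v ` active s \<subseteq> active s - {u}"
    by (auto simp: vertex_map_def)
  have "a \<in> active s - {u} \<longleftrightarrow> {a} \<in> (\<lambda>\<rho>. vertex_map u v ` \<rho>) ` cplx s" for a
  proof
    assume "a \<in> active s - {u}"
    then have "{a} \<in> cplx s" "vertex_map u v ` {a} = {a}" using A by (auto simp: vertex_map_def)
    then show "{a} \<in> (\<lambda>\<rho>. vertex_map u v ` \<rho>) ` cplx s" by (metis image_eqI)
  next
    assume "{a} \<in> (\<lambda>\<rho>. vertex_map u v ` \<rho>) ` cplx s"
    then obtain \<rho> where "\<rho> \<subseteq> active s" "{a} = vertex_map u v ` \<rho>" using K by blast
    then show "a \<in> active s - {u}" using map_active by blast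
  qed
  then show ?thesis by (auto simp: tstep_Contr)
qed

lemma coherent_Contr:
  assumes "coherent_state s" and "valid_step s (Contr u v)"
  shows "coherent_state (tstep s (Contr u v))"
proof -
  note C = coherent_stateD[OF assms(1)]
  have "finite (cone_cplx (tstep s (Contr u v)))"
    unfolding tstep_Contr using C(1) act_star_subset by (metis finite_Un finite_imageI finite_subset)
  moreover have "{} \<notin> cone_cplx (tstep s (Contr u v))"
    unfolding tstep_Contr using C(2) by blast
  moreover have "face_closed (cone_cplx (tstep s (Contr u v)))"
    using face_closed_Contr[OF assms(1) valid_Contr_vertices(4)[OF assms]] .
  ultimately show ?thesis
    unfolding coherent_state_def
    using active_part_Contr[OF assms, symmetric] vertices_Contr[OF assms] by (intro conjI)
qed

lemma coherent_tstep:
  assumes "coherent_state s" and "valid_step s op"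
  shows "coherent_state (tstep s op)"
  using assms coherent_Incl[of s] coherent_Contr[of s] by (cases op) blast+

lemma card_Diff_le_card_Diff_swap:
  assumes "finite A" "finite B" "card A \<le> card B"
  shows "card (A - B) \<le> card (B - A)"
  using assms card_Diff_subset_Int[of A B] card_Diff_subset_Int[of B A]
  by (simp add: Int_commute)

lemma card_cone_growth_Contr:
  assumes "coherent_state s"
  shows "card (cone_cplx (tstep s (Contr u v)) - cone_cplx s) \<le> card (act_star u s - act_star v s)"
proof -
  note C = coherent_stateD(1,3)[OF assms]
  have fin: "finite (act_star u s - act_star v s)"
    using C(1) act_star_subset by (meson Diff_subset finite_subset subset_trans)
  have "cone_cplx (tstep s (Contr u v)) - cone_cplx s \<subseteq> insert v ` (act_star u s - act_star v s)"
  proof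
    fix \<rho> assume "\<rho> \<in> cone_cplx (tstep s (Contr u v)) - cone_cplx s"
    then obtain \<tau> where \<tau>: "\<tau> \<in> act_star u s" "\<rho> = insert v \<tau>" "\<rho> \<notin> cone_cplx s"
      by (auto simp: tstep_Contr)
    \<comment> \<open>if \<open>\<tau>\<close> lies in the closed star of \<open>v\<close>, then \<open>insert v \<tau>\<close> is already a simplex of the cone\<close>
    have "\<tau> \<notin> act_star v s"
    proof
      assume "\<tau> \<in> act_star v s"
      then obtain \<rho>0 where "\<rho>0 \<in> cone_cplx s" "insert v \<tau> \<subseteq> \<rho>0"
        unfolding act_star_iff by blast
      then have "insert v \<tau> \<in> cone_cplx s" using face_closedD[OF C(2)] by blast
      then show False using \<tau> by simp
    qed
    then show "\<rho> \<in> insert v ` (act_star u s - act_star v s)" using \<tau> by blast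
  qed
  then have "card (cone_cplx (tstep s (Contr u v)) - cone_cplx s) \<le> card (insert v ` (act_star u s - act_star v s))"
    using fin by (simp add: card_mono)
  also have "\<dots> \<le> card (act_star u s - act_star v s)"
    using fin by (rule card_image_le)
  finally show ?thesis .
qed

lemma card_act_star_Diff_swap:
  assumes "coherent_state s" and "valid_step s (Contr u v)"
  shows "card (act_star u s - act_star v s) \<le> card (act_star v s - act_star u s)"
proof (rule card_Diff_le_card_Diff_swap)
  show "finite (act_star u s)" "finite (act_star v s)"
    using finite_subset[OF act_star_subset coherent_stateD(1)[OF assms(1)]] by blast+
  show "card (act_star u s) \<le> card (act_star v s)" using assms(2) by simp
qed

lemma card_act_star_Diff_le:
  assumes "coherent_state s" and "x \<in> active s"
  shows "card (act_star x s - act_star y s) \<le> 2 * card {\<rho> \<in> cplx s. x \<in> \<rho> \<and> y \<notin> \<rho>}"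
proof -
  note C = coherent_stateD(1,3,4)[OF assms(1)]
  let ?Y = "{\<rho> \<in> cplx s. x \<in> \<rho> \<and> y \<notin> \<rho>}"
  have finY: "finite ?Y" using C(1) C(3) by simp
  \<comment> \<open>\<open>\<tau>\<close> is recovered from the active simplex \<open>insert x \<tau>\<close> of \<open>K\<close> as either itself or with \<open>x\<close> removed\<close>
  have "act_star x s - act_star y s \<subseteq> ?Y \<union> (\<lambda>\<rho>. \<rho> - {x}) ` ?Y"
  proof
    fix \<tau> assume "\<tau> \<in> act_star x s - act_star y s"
    then have \<tau>: "\<tau> \<in> act_star x s" "\<tau> \<notin> act_star y s" by simp_all
    obtain \<rho>0 where \<rho>0: "\<rho>0 \<in> cone_cplx s" "insert x \<tau> \<subseteq> \<rho>0" "\<tau> \<subseteq> active s"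
      using \<tau>(1) unfolding act_star_iff by blast
    then have C\<tau>: "insert x \<tau> \<in> cone_cplx s" using face_closedD[OF C(2)] by blast
    then have K: "insert x \<tau> \<in> cplx s" using C(3) \<rho>0(3) assms(2) by simp
    have "y \<notin> insert x \<tau>"
    proof
      assume "y \<in> insert x \<tau>"
      then have "\<tau> \<in> act_star y s"
        using \<tau>(1) C\<tau> unfolding act_star_iff by blast
      then show False using \<tau>(2) by simp
    qed
    then have "insert x \<tau> \<in> ?Y" using K by simp
    then show "\<tau> \<in> ?Y \<union> (\<lambda>\<rho>. \<rho> - {x}) ` ?Y"
      by (cases "x \<in> \<tau>") (auto simp: insert_absorb intro!: image_eqI[of _ _ "insert x \<tau>"])
  qed
  then have "card (act_star x s - act_star y s) \<le> card (?Y \<union> (\<lambda>\<rho>. \<rho> - {x}) ` ?Y)"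
    using finY by (simp add: card_mono)
  also have "\<dots> \<le> card ?Y + card ((\<lambda>\<rho>. \<rho> - {x}) ` ?Y)" by (rule card_Un_le)
  also have "\<dots> \<le> 2 * card ?Y" using card_image_le[OF finY, of "\<lambda>\<rho>. \<rho> - {x}"] by simp
  finally show ?thesis .
qed

lemma valid_tower_step:
  "valid_tower ops \<Longrightarrow> t < length ops \<Longrightarrow> valid_step (state_at ops t) (ops ! t)"
  by (simp add: valid_tower_def)

lemma coherent_state_at:
  assumes "valid_tower ops" and "t \<le> length ops"
  shows "coherent_state (state_at ops t)"
  using assms(2)
proof (induction t)
  case 0
  then show ?case by (simp add: state_at_def coherent_init_state)
next
  case (Suc t)
  then have lt: "t < length ops" by simp
  then have "coherent_state (state_at ops t)" using Suc.IH by simp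
  from coherent_tstep[OF this valid_tower_step[OF assms(1) lt]] show ?case
    by (simp add: state_at_Suc[OF lt])
qed

definition creates_root :: "'v tower_op list \<Rightarrow> nat \<Rightarrow> 'v \<Rightarrow> bool" where
  "creates_root ops t a \<longleftrightarrow> ops ! t = Incl {a} \<or> (\<exists>u. ops ! t = Contr u a)"

lemma roots_at_Suc:
  "roots_at ops (Suc t) a = (if creates_root ops t a then t else roots_at ops t a)"
proof (cases "ops ! t")
  case (Incl \<sigma>)
  then show ?thesis
    by (cases "card \<sigma> = 1") (auto simp: creates_root_def card_1_singleton_iff)
qed (auto simp: creates_root_def)

declare roots_at.simps(2) [simp del]

lemma creates_root_unique: "creates_root ops t a \<Longrightarrow> creates_root ops t b \<Longrightarrow> a = b"
  by (auto simp: creates_root_def)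

lemma creates_root_is_node: "t < length ops \<Longrightarrow> creates_root ops t a \<Longrightarrow> is_node ops t"
  by (auto simp: creates_root_def is_node_def)

definition op_map :: "'v tower_op \<Rightarrow> 'v \<Rightarrow> 'v" where
  "op_map op = (case op of Incl \<sigma> \<Rightarrow> id | Contr u v \<Rightarrow> vertex_map u v)"

fun trace :: "'v tower_op list \<Rightarrow> nat \<Rightarrow> nat \<Rightarrow> 'v \<Rightarrow> 'v" where
  "trace ops j 0 x = x"
| "trace ops j (Suc t) x = (if j \<le> t then op_map (ops ! t) (trace ops j t x) else x)"

lemma trace_id: "t \<le> j \<Longrightarrow> trace ops j t x = x"
  by (induction t) auto

lemma simplex_origin:
  "t \<le> length ops \<Longrightarrow> \<rho> \<in> cplx (state_at ops t) \<Longrightarrow>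
     \<exists>j<t. \<exists>\<sigma>. ops ! j = Incl \<sigma> \<and> trace ops (Suc j) t ` \<sigma> = \<rho>"
proof (induction t arbitrary: \<rho>)
  case 0
  then show ?case by (simp add: state_at_def init_state_def cplx_def)
next
  case (Suc t)
  then have lt: "t < length ops" by simp
  have trace_Suc: "trace ops (Suc j) (Suc t) ` \<sigma> = op_map (ops ! t) ` trace ops (Suc j) t ` \<sigma>"
    if "j < t" for j \<sigma> using that by (auto simp: image_image)
  show ?case
  proof (cases "ops ! t")
    case (Incl \<tau>)
    then have "\<rho> = \<tau> \<or> \<rho> \<in> cplx (state_at ops t)"
      using Suc.prems by (simp add: state_at_Suc[OF lt] tstep_Incl)
    then show ?thesis
    proof
      assume "\<rho> = \<tau>"
      then show ?thesis using Incl trace_id[of "Suc t" "Suc t"] by (intro exI[of _ t]) auto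
    next
      assume "\<rho> \<in> cplx (state_at ops t)"
      then obtain j \<sigma> where "j < t" "ops ! j = Incl \<sigma>" "trace ops (Suc j) t ` \<sigma> = \<rho>"
        using Suc.IH lt by fastforce
      then show ?thesis using trace_Suc Incl by (intro exI[of _ j]) (auto simp: op_map_def)
    qed
  next
    case (Contr u v)
    then obtain \<rho>0 where \<rho>0: "\<rho>0 \<in> cplx (state_at ops t)" "\<rho> = vertex_map u v ` \<rho>0"
      using Suc.prems by (auto simp: state_at_Suc[OF lt] tstep_Contr)
    then obtain j \<sigma> where "j < t" "ops ! j = Incl \<sigma>" "trace ops (Suc j) t ` \<sigma> = \<rho>0"
      using Suc.IH lt by fastforce
    then show ?thesis using trace_Suc \<rho>0(2) Contr by (intro exI[of _ j]) (auto simp: op_map_def)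
  qed
qed

lemma finite_E_set: "finite (E_set ops x)"
  by (rule finite_subset[of _ "{..<length ops}"]) (auto simp: E_set_def)

lemma E_set_mono: "(a, b) \<in> (parent_rel ops)\<^sup>* \<Longrightarrow> E_set ops a \<subseteq> E_set ops b"
  unfolding E_set_def subtree_def by (blast intro: rtrancl_trans)

lemma asc_path_snoc:
  assumes "asc_path ops (ys @ [x])" "ys \<noteq> []"
  shows "asc_path ops ys" "parent ops (last ys) x"
proof -
  have steps: "parent ops ((ys @ [x]) ! k) ((ys @ [x]) ! Suc k)" if "Suc k < length (ys @ [x])" for k
    using assms(1) that unfolding asc_path_def by blast
  from steps[of "length ys - 1"] show "parent ops (last ys) x"
    using assms(2) by (simp add: nth_append last_conv_nth)
  have "parent ops (ys ! k) (ys ! Suc k)" if "Suc k < length ys" for k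
    using steps[of k] that by (simp add: nth_append)
  then show "asc_path ops ys"
    using assms unfolding asc_path_def by simp
qed

lemma finite_endpoints:
  assumes "\<forall>p\<in>P. asc_path ops p"
  shows "finite (last ` P)"
proof (rule finite_subset)
  show "last ` P \<subseteq> {..<length ops}"
  proof
    fix x assume "x \<in> last ` P"
    then obtain p where "p \<in> P" "x = last p" by blast
    then have "x \<in> set p" "\<forall>y\<in>set p. is_node ops y"
      using assms unfolding asc_path_def by auto
    then show "x \<in> {..<length ops}" by (simp add: is_node_def)
  qed
qed simp

context
  fixes ops :: "'v tower_op list"
  assumes valid: "valid_tower ops"
begin

lemma active_iff_vertex:
  "t \<le> length ops \<Longrightarrow> a \<in> active (state_at ops t) \<longleftrightarrow> {a} \<in> cplx (state_at ops t)"
  using coherent_stateD(5)[OF coherent_state_at[OF valid]] by blast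

lemma Contr_active:
  assumes "t < length ops" "ops ! t = Contr u v"
  shows "u \<in> active (state_at ops t)" "v \<in> active (state_at ops t)" "u \<noteq> v"
  using valid_tower_step[OF valid assms(1)] assms active_iff_vertex[of t] by (auto simp: is_vertex_def)

lemma active_Suc:
  assumes "t < length ops"
  shows "a \<in> active (state_at ops (Suc t)) \<longleftrightarrow>
    creates_root ops t a \<or> (a \<in> active (state_at ops t) \<and> (\<forall>v. ops ! t \<noteq> Contr a v))"
proof (cases "ops ! t")
  case (Incl \<sigma>)
  have "card \<sigma> = 1 \<Longrightarrow> a \<in> \<sigma> \<longleftrightarrow> \<sigma> = {a}" by (auto simp: card_1_singleton_iff)
  then show ?thesis
    using Incl by (auto simp: state_at_Suc[OF assms] tstep_Incl creates_root_def)
next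
  case (Contr u v)
  then show ?thesis
    using Contr_active[OF assms Contr] by (auto simp: state_at_Suc[OF assms] tstep_Contr creates_root_def)
qed

lemma root_is_earlier_node:
  "t \<le> length ops \<Longrightarrow> a \<in> active (state_at ops t) \<Longrightarrow>
     is_node ops (roots_at ops t a) \<and> roots_at ops t a < t"
proof (induction t arbitrary: a)
  case 0
  then show ?case by (simp add: state_at_def init_state_def active_def)
next
  case (Suc t)
  then have lt: "t < length ops" by simp
  show ?case
  proof (cases "creates_root ops t a")
    case True
    then show ?thesis using creates_root_is_node[OF lt] by (simp add: roots_at_Suc)
  next
    case False
    then have "a \<in> active (state_at ops t)" using Suc.prems active_Suc[OF lt] by blast
    then show ?thesis using Suc.IH[of a] lt False by (auto simp: roots_at_Suc)
  qed
qed

lemma inj_on_roots_at: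
  "t \<le> length ops \<Longrightarrow> inj_on (roots_at ops t) (active (state_at ops t))"
proof (induction t)
  case 0
  then show ?case by (simp add: state_at_def init_state_def active_def)
next
  case (Suc t)
  then have lt: "t < length ops" by simp
  have old: "roots_at ops (Suc t) a = roots_at ops t a \<and> roots_at ops t a < t \<and> a \<in> active (state_at ops t)"
    if "a \<in> active (state_at ops (Suc t))" "\<not> creates_root ops t a" for a
    using that active_Suc[OF lt] root_is_earlier_node[of t a] lt by (simp add: roots_at_Suc)
  show ?case
  proof (rule inj_onI)
    fix a b assume a: "a \<in> active (state_at ops (Suc t))" and b: "b \<in> active (state_at ops (Suc t))"
      and eq: "roots_at ops (Suc t) a = roots_at ops (Suc t) b"
    consider "creates_root ops t a" "creates_root ops t b"
      | "creates_root ops t a \<noteq> creates_root ops t b"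
      | "\<not> creates_root ops t a" "\<not> creates_root ops t b" by blast
    then show "a = b"
    proof cases
      case 1
      then show ?thesis by (rule creates_root_unique)
    next
      case 2
      then show ?thesis using eq old[OF a] old[OF b] by (auto simp: roots_at_Suc)
    next
      case 3
      then show ?thesis using eq old[OF a] old[OF b] Suc.IH lt by (simp add: inj_on_eq_iff)
    qed
  qed
qed

lemma root_not_earlier_child:
  "t \<le> length ops \<Longrightarrow> a \<in> active (state_at ops t) \<Longrightarrow> k < t \<Longrightarrow> \<not> parent ops (roots_at ops t a) k"
proof (induction t arbitrary: a)
  case 0
  then show ?case by simp
next
  case (Suc t)
  then have lt: "t < length ops" by simp
  show ?case
  proof
    assume "parent ops (roots_at ops (Suc t) a) k"
    then obtain u v where k: "k < length ops" "ops ! k = Contr u v"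
      and child: "roots_at ops (Suc t) a \<in> {roots_at ops k u, roots_at ops k v}"
      unfolding parent_def by blast
    have uv: "u \<in> active (state_at ops k)" "v \<in> active (state_at ops k)" "u \<noteq> v"
      using Contr_active[OF k] by auto
    then have "roots_at ops k u < k" "roots_at ops k v < k"
      using root_is_earlier_node[of k] k(1) by auto
    show False
    proof (cases "creates_root ops t a")
      case True
      then show False
        using child \<open>roots_at ops k u < k\<close> \<open>roots_at ops k v < k\<close> Suc.prems(3)
        by (auto simp: roots_at_Suc)
    next
      case False
      then have a: "a \<in> active (state_at ops t)" "\<forall>v. ops ! t \<noteq> Contr a v"
        and root: "roots_at ops (Suc t) a = roots_at ops t a"
        using Suc.prems active_Suc[OF lt] by (auto simp: roots_at_Suc)
      show False
      proof (cases "k = t")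
        case True
        then have "a \<noteq> u" "a \<noteq> v" using a(2) False k(2) by (auto simp: creates_root_def)
        then show False
          using child root inj_on_roots_at[of t] uv a(1) True lt by (auto dest: inj_onD)
      next
        case False
        then show False using Suc.IH[of a] a(1) root lt Suc.prems
          \<open>parent ops (roots_at ops (Suc t) a) k\<close> by simp
      qed
    qed
  qed
qed

lemma parentE:
  assumes "parent ops j k"
  obtains u v where "j < k" "k < length ops" "ops ! k = Contr u v"
    "j = roots_at ops k u \<or> j = roots_at ops k v"
proof -
  obtain u v where uv: "k < length ops" "ops ! k = Contr u v" "j = roots_at ops k u \<or> j = roots_at ops k v"
    using assms unfolding parent_def by blast
  moreover have "j < k"
    using uv root_is_earlier_node[of k] Contr_active[OF uv(1,2)] by auto
  ultimately show ?thesis using that by blast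
qed

lemma single_valued_parent_rel: "single_valued (parent_rel ops)"
proof -
  have False if jk: "parent ops j k" and jk': "parent ops j k'" and "k < k'" for j k k'
  proof -
    obtain u v where "k' < length ops" "ops ! k' = Contr u v" "j = roots_at ops k' u \<or> j = roots_at ops k' v"
      using jk' by (rule parentE)
    then show False
      using root_not_earlier_child[of k'] Contr_active[of k' u v] jk \<open>k < k'\<close> by fastforce
  qed
  then show ?thesis
    unfolding single_valued_def parent_rel_def by (metis case_prodD mem_Collect_eq linorder_neqE_nat)
qed

lemma parent_rel_rtrancl_le: "(x, y) \<in> (parent_rel ops)\<^sup>* \<Longrightarrow> x \<le> y"
proof (induction rule: rtrancl_induct)
  case (step y z)
  then show ?case by (auto simp: parent_rel_def elim: parentE)
qed simp

lemma roots_no_common_descendant: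
  assumes "t \<le> length ops" "a \<in> active (state_at ops t)" "b \<in> active (state_at ops t)" "a \<noteq> b"
    "(y, roots_at ops t a) \<in> (parent_rel ops)\<^sup>*" "(y, roots_at ops t b) \<in> (parent_rel ops)\<^sup>*"
  shows False
proof -
  have no_path: "(roots_at ops t a', roots_at ops t b') \<notin> (parent_rel ops)\<^sup>*"
    if a': "a' \<in> active (state_at ops t)" and b': "b' \<in> active (state_at ops t)" and "a' \<noteq> b'" for a' b'
  proof
    assume path: "(roots_at ops t a', roots_at ops t b') \<in> (parent_rel ops)\<^sup>*"
    have "roots_at ops t a' \<noteq> roots_at ops t b'"
      using inj_on_roots_at[OF assms(1)] a' b' \<open>a' \<noteq> b'\<close> by (auto dest: inj_onD)
    then obtain k where k: "parent ops (roots_at ops t a') k" "(k, roots_at ops t b') \<in> (parent_rel ops)\<^sup>*"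
      using path by (metis converse_rtranclE mem_Collect_eq old.prod.case parent_rel_def)
    have "t \<le> k" using root_not_earlier_child[OF assms(1) a'] k(1) by (meson not_le)
    moreover have "k \<le> roots_at ops t b'" using parent_rel_rtrancl_le[OF k(2)] .
    moreover have "roots_at ops t b' < t" using root_is_earlier_node[OF assms(1) b'] by simp
    ultimately show False by simp
  qed
  show False
    using single_valued_confluent[OF single_valued_parent_rel assms(5,6)]
      no_path[OF assms(2,3,4)] no_path[OF assms(3,2) assms(4)[symmetric]] by blast
qed

lemma creates_root_active:
  assumes "t < length ops" "creates_root ops t a" "a \<in> active (state_at ops t)"
  shows "\<exists>u. ops ! t = Contr u a"
proof (rule ccontr)
  assume "\<nexists>u. ops ! t = Contr u a"
  then have "ops ! t = Incl {a}" using assms(2) by (simp add: creates_root_def)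
  \<comment> \<open>a vertex inclusion introduces a fresh vertex, but active vertices already lie in the cone\<close>
  moreover have "{a} \<in> cplx (state_at ops t)"
    using assms(1,3) active_iff_vertex by simp
  then have "{a} \<in> cone_cplx (state_at ops t)"
    using coherent_stateD(4)[OF coherent_state_at[OF valid less_imp_le[OF assms(1)]]] by blast
  ultimately show False using valid_tower_step[OF valid assms(1)] by auto
qed

lemma included_vertex_active:
  assumes "j < length ops" "ops ! j = Incl \<sigma>" "w \<in> \<sigma>"
  shows "w \<in> active (state_at ops (Suc j))"
proof -
  have "\<forall>\<tau>. \<tau> \<noteq> {} \<and> \<tau> \<subset> \<sigma> \<longrightarrow> \<tau> \<in> cplx (state_at ops j)"
    using valid_tower_step[OF valid assms(1)] assms(2) by simp
  then have "{w} = \<sigma> \<or> {w} \<in> cplx (state_at ops j)"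
    using assms(3) by blast
  then have "{w} \<in> cplx (state_at ops (Suc j))"
    using assms(2) by (auto simp: state_at_Suc[OF assms(1)] tstep_Incl)
  then show ?thesis using active_iff_vertex[of "Suc j" w] assms(1) by simp
qed

lemma op_map_active:
  assumes "t < length ops" "a \<in> active (state_at ops t)"
  shows "op_map (ops ! t) a \<in> active (state_at ops (Suc t))
    \<and> (roots_at ops t a, roots_at ops (Suc t) (op_map (ops ! t) a)) \<in> (parent_rel ops)\<^sup>*"
proof (cases "ops ! t")
  case (Incl \<sigma>)
  then have "\<not> creates_root ops t a" using creates_root_active[OF assms(1) _ assms(2)] by auto
  then show ?thesis using assms Incl active_Suc by (simp add: op_map_def roots_at_Suc)
next
  case (Contr u v)
  show ?thesis
  proof (cases "a = u \<or> a = v")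
    case True
    then have "op_map (ops ! t) a = v" using Contr by (auto simp: op_map_def vertex_map_def)
    moreover have "creates_root ops t v" using Contr by (simp add: creates_root_def)
    moreover have "parent ops (roots_at ops t a) t"
      unfolding parent_def using root_is_earlier_node assms Contr True by auto
    ultimately show ?thesis
      using assms(1) active_Suc by (auto simp: roots_at_Suc parent_rel_def)
  next
    case False
    then have "op_map (ops ! t) a = a" "\<not> creates_root ops t a"
      using Contr by (auto simp: op_map_def vertex_map_def creates_root_def)
    then show ?thesis using assms Contr False active_Suc by (auto simp: roots_at_Suc)
  qed
qed

lemma trace_below_root:
  assumes "t \<le> length ops" "j < t" "ops ! j = Incl \<sigma>" "w \<in> \<sigma>"
  shows "trace ops (Suc j) t w \<in> active (state_at ops t)
    \<and> (roots_at ops (Suc j) w, roots_at ops t (trace ops (Suc j) t w)) \<in> (parent_rel ops)\<^sup>*"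
  using assms(1,2)
proof (induction t)
  case 0
  then show ?case by simp
next
  case (Suc t)
  then have lt: "t < length ops" by simp
  show ?case
  proof (cases "j = t")
    case True
    then show ?thesis using included_vertex_active[OF lt] assms(3,4) trace_id[of "Suc t" "Suc j"] by simp
  next
    case False
    then have "j < t" using Suc.prems by simp
    then show ?thesis
      using Suc.IH lt op_map_active[OF lt, of "trace ops (Suc j) t w"] by (auto intro: rtrancl_trans)
  qed
qed

lemma included_in_E_set_of_root:
  assumes "i \<le> length ops" "j < i" "ops ! j = Incl \<sigma>" "x \<in> trace ops (Suc j) i ` \<sigma>"
  shows "j \<in> E_set ops (roots_at ops i x)"
proof -
  obtain w where "w \<in> \<sigma>" "trace ops (Suc j) i w = x" using assms(4) by blast
  then have "(roots_at ops (Suc j) w, roots_at ops i x) \<in> (parent_rel ops)\<^sup>*"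
    using trace_below_root[OF assms(1-3)] by blast
  then show ?thesis
    using assms(1-3) \<open>w \<in> \<sigma>\<close> unfolding E_set_def subtree_def by auto
qed

lemma included_notin_E_set_of_root:
  assumes "i \<le> length ops" "j < i" "ops ! j = Incl \<sigma>"
    and "y \<in> active (state_at ops i)" "y \<notin> trace ops (Suc j) i ` \<sigma>"
  shows "j \<notin> E_set ops (roots_at ops i y)"
proof
  assume "j \<in> E_set ops (roots_at ops i y)"
  then obtain w where w: "w \<in> \<sigma>" "(roots_at ops (Suc j) w, roots_at ops i y) \<in> (parent_rel ops)\<^sup>*"
    using assms(3) unfolding E_set_def subtree_def by auto
  let ?b = "trace ops (Suc j) i w"
  have "?b \<in> active (state_at ops i)" "(roots_at ops (Suc j) w, roots_at ops i ?b) \<in> (parent_rel ops)\<^sup>*"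
    using trace_below_root[OF assms(1-3) w(1)] by auto
  moreover have "?b \<noteq> y" using assms(5) w(1) by blast
  ultimately show False
    using roots_no_common_descendant[OF assms(1) _ assms(4) _ _ w(2)] by blast
qed

lemma card_cofaces_le_card_E_set_Diff:
  assumes "i \<le> length ops" "y \<in> active (state_at ops i)"
  shows "card {\<rho> \<in> cplx (state_at ops i). x \<in> \<rho> \<and> y \<notin> \<rho>}
     \<le> card (E_set ops (roots_at ops i x) - E_set ops (roots_at ops i y))"
proof -
  let ?Y = "{\<rho> \<in> cplx (state_at ops i). x \<in> \<rho> \<and> y \<notin> \<rho>}"
  obtain g where g: "\<And>\<rho>. \<rho> \<in> cplx (state_at ops i) \<Longrightarrow>
      g \<rho> < i \<and> (\<exists>\<sigma>. ops ! g \<rho> = Incl \<sigma> \<and> trace ops (Suc (g \<rho>)) i ` \<sigma> = \<rho>)"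
    using simplex_origin[OF assms(1)] by metis
  \<comment> \<open>each simplex is charged to the inclusion step it originates from\<close>
  have "inj_on g ?Y"
    by (rule inj_onI) (metis (no_types, lifting) g mem_Collect_eq tower_op.inject(1))
  moreover have "g ` ?Y \<subseteq> E_set ops (roots_at ops i x) - E_set ops (roots_at ops i y)"
  proof
    fix j assume "j \<in> g ` ?Y"
    then obtain \<rho> where \<rho>: "\<rho> \<in> ?Y" "j = g \<rho>" by blast
    then obtain \<sigma> where j: "j < i" "ops ! j = Incl \<sigma>" and "trace ops (Suc j) i ` \<sigma> = \<rho>"
      using g[of \<rho>] \<rho> by auto
    then have "x \<in> trace ops (Suc j) i ` \<sigma>" "y \<notin> trace ops (Suc j) i ` \<sigma>" using \<rho>(1) by auto
    then show "j \<in> E_set ops (roots_at ops i x) - E_set ops (roots_at ops i y)"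
      using included_in_E_set_of_root[OF assms(1) j] included_notin_E_set_of_root[OF assms(1) j assms(2)]
      by blast
  qed
  moreover have "finite (E_set ops (roots_at ops i x) - E_set ops (roots_at ops i y))"
    using finite_E_set by blast
  ultimately show ?thesis by (rule card_inj_on_le)
qed

lemma card_cofaces_le_card_E_set_Diff_Contr:
  assumes "k < length ops" "ops ! k = Contr u v" "a \<in> {u, v}" "b \<in> {u, v}"
  shows "card {\<rho> \<in> cplx (state_at ops k). a \<in> \<rho> \<and> b \<notin> \<rho>}
    \<le> card (E_set ops k - E_set ops (roots_at ops k b))"
proof -
  note uv = Contr_active[OF assms(1,2)]
  have "parent ops (roots_at ops k a) k"
    using assms root_is_earlier_node uv by (auto simp: parent_def)
  then have E_child: "E_set ops (roots_at ops k a) \<subseteq> E_set ops k"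
    by (intro E_set_mono) (simp add: parent_rel_def r_into_rtrancl)
  have "b \<in> active (state_at ops k)" using assms(4) uv by blast
  then have "card {\<rho> \<in> cplx (state_at ops k). a \<in> \<rho> \<and> b \<notin> \<rho>}
      \<le> card (E_set ops (roots_at ops k a) - E_set ops (roots_at ops k b))"
    by (rule card_cofaces_le_card_E_set_Diff[OF less_imp_le[OF assms(1)]])
  also have "\<dots> \<le> card (E_set ops k - E_set ops (roots_at ops k b))"
    using finite_Diff[OF finite_E_set] Diff_mono[OF E_child subset_refl] by (rule card_mono)
  finally show ?thesis .
qed

lemma node_cost_le_card_E_set_Diff:
  assumes "parent ops c k"
  shows "node_cost ops k \<le> 2 * card (E_set ops k - E_set ops c)"
proof -
  obtain u v where k: "k < length ops" "ops ! k = Contr u v"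
    and c: "c = roots_at ops k u \<or> c = roots_at ops k v"
    using assms by (rule parentE)
  let ?s = "state_at ops k"
  note coh = coherent_state_at[OF valid less_imp_le[OF k(1)]]
  have step: "valid_step ?s (Contr u v)" using valid_tower_step[OF valid k(1)] k(2) by simp
  note uv = Contr_active[OF k]
  have cost: "node_cost ops k \<le> card (act_star u ?s - act_star v ?s)"
    using card_cone_growth_Contr[OF coh] k by (simp add: node_cost_def state_at_Suc)
  \<comment> \<open>the contraction removes the vertex with the smaller active star, so either child can be charged\<close>
  show ?thesis
  proof (cases "c = roots_at ops k u")
    case True
    have "node_cost ops k \<le> card (act_star v ?s - act_star u ?s)"
      using cost card_act_star_Diff_swap[OF coh step] by linarith
    also have "\<dots> \<le> 2 * card {\<rho> \<in> cplx ?s. v \<in> \<rho> \<and> u \<notin> \<rho>}"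
      using card_act_star_Diff_le[OF coh uv(2)] .
    also have "\<dots> \<le> 2 * card (E_set ops k - E_set ops c)"
      using card_cofaces_le_card_E_set_Diff_Contr[OF k, of v u] True by simp
    finally show ?thesis .
  next
    case False
    then have "c = roots_at ops k v" using c by blast
    have "node_cost ops k \<le> 2 * card {\<rho> \<in> cplx ?s. u \<in> \<rho> \<and> v \<notin> \<rho>}"
      using cost card_act_star_Diff_le[OF coh uv(1), of v] by linarith
    also have "\<dots> \<le> 2 * card (E_set ops k - E_set ops c)"
      using card_cofaces_le_card_E_set_Diff_Contr[OF k, of u v] \<open>c = roots_at ops k v\<close> by simp
    finally show ?thesis .
  qed
qed

lemma node_cost_le_card_E_set: "node_cost ops x \<le> 2 * card (E_set ops x)"
proof (cases "x < length ops \<and> (\<exists>u v. ops ! x = Contr u v)")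
  case True
  then obtain u v where uv: "x < length ops" "ops ! x = Contr u v" by blast
  then have "parent ops (roots_at ops x u) x"
    using root_is_earlier_node[of x u] Contr_active[OF uv] by (auto simp: parent_def)
  then have "node_cost ops x \<le> 2 * card (E_set ops x - E_set ops (roots_at ops x u))"
    by (rule node_cost_le_card_E_set_Diff)
  also have "\<dots> \<le> 2 * card (E_set ops x)"
    using card_mono[OF finite_E_set Diff_subset] by simp
  finally show ?thesis .
next
  case False
  then show ?thesis unfolding node_cost_def by (simp only: if_False)
qed

lemma path_cost_le_card_E_set:
  "asc_path ops xs \<Longrightarrow> path_cost ops xs \<le> 2 * card (E_set ops (last xs))"
proof (induction xs rule: rev_induct)
  case Nil
  then show ?case by (simp add: asc_path_def)
next
  case (snoc x ys)
  show ?case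
  proof (cases "ys = []")
    case True
    then show ?thesis using node_cost_le_card_E_set[of x] by (simp add: path_cost_def)
  next
    case False
    then have "asc_path ops ys" and p: "parent ops (last ys) x"
      using asc_path_snoc snoc.prems by blast+
    then have "E_set ops (last ys) \<subseteq> E_set ops x"
      by (intro E_set_mono) (simp add: parent_rel_def r_into_rtrancl)
    \<comment> \<open>the bounds telescope along the path\<close>
    then have "card (E_set ops (last ys)) + card (E_set ops x - E_set ops (last ys)) = card (E_set ops x)"
      using finite_E_set by (metis card_Diff_subset card_mono le_add_diff_inverse)
    moreover have "path_cost ops (ys @ [x]) = path_cost ops ys + node_cost ops x"
      by (simp add: path_cost_def)
    ultimately show ?thesis
      using snoc.IH[OF \<open>asc_path ops ys\<close>] node_cost_le_card_E_set_Diff[OF p] by simp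
  qed
qed

lemma card_included_le_tower_dim:
  assumes "j < length ops" "ops ! j = Incl \<sigma>"
  shows "card \<sigma> \<le> tower_dim ops + 1"
proof -
  let ?D = "\<Union>i \<in> {0..length ops}. (\<lambda>\<sigma>. card \<sigma> - 1) ` cplx (state_at ops i)"
  have "finite (cplx (state_at ops i))" if "i \<le> length ops" for i
    using coherent_stateD(1,4)[OF coherent_state_at[OF valid that]] by simp
  then have "finite ?D" by simp
  moreover have "\<sigma> \<in> cplx (state_at ops (Suc j))"
    using assms by (simp add: state_at_Suc tstep_Incl)
  then have "card \<sigma> - 1 \<in> ?D" using assms(1) by force
  ultimately have "card \<sigma> - 1 \<le> tower_dim ops"
    unfolding tower_dim_def by (simp add: Max_ge_iff)
  then show ?thesis by simp
qed

lemma independent_endpoint_unique: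
  assumes "independent_paths ops P" "p \<in> P" "q \<in> P"
    and "(y, last p) \<in> (parent_rel ops)\<^sup>*" "(y, last q) \<in> (parent_rel ops)\<^sup>*"
  shows "last p = last q"
proof (rule ccontr)
  assume ne: "last p \<noteq> last q"
  have indep: "\<not> proper_ancestor ops (last p') (last q')" if "p' \<in> P" "q' \<in> P" "p' \<noteq> q'" for p' q'
    using assms(1) that unfolding independent_paths_def by blast
  have "(last p, last q) \<in> (parent_rel ops)\<^sup>* \<or> (last q, last p) \<in> (parent_rel ops)\<^sup>*"
    using single_valued_confluent[OF single_valued_parent_rel assms(4,5)] .
  then have "(last p, last q) \<in> (parent_rel ops)\<^sup>+ \<or> (last q, last p) \<in> (parent_rel ops)\<^sup>+"
    using ne by (auto dest: rtranclD)
  moreover have "p \<noteq> q" using ne by blast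
  ultimately show False
    using indep assms(2,3) unfolding proper_ancestor_def by blast
qed

lemma card_endpoints_including_le:
  assumes "independent_paths ops P" "j < length ops" "ops ! j = Incl \<sigma>"
  shows "card {x \<in> last ` P. j \<in> E_set ops x} \<le> card \<sigma>"
proof -
  let ?B = "\<lambda>w. {x \<in> last ` P. (roots_at ops (Suc j) w, x) \<in> (parent_rel ops)\<^sup>*}"
  have fin: "finite \<sigma>" using valid_tower_step[OF valid assms(2)] assms(3) by simp
  have B: "finite (?B w) \<and> card (?B w) \<le> 1" for w
  proof -
    have "\<forall>p\<in>P. asc_path ops p" using assms(1) by (simp add: independent_paths_def)
    then have finB: "finite (?B w)" by (rule rev_finite_subset[OF finite_endpoints]) blast
    have eq: "x = x'" if x: "x \<in> ?B w" and x': "x' \<in> ?B w" for x x'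
    proof -
      obtain p q where p: "p \<in> P" "x = last p" and q: "q \<in> P" "x' = last q"
        using x x' by auto
      then show ?thesis using independent_endpoint_unique[OF assms(1) p(1) q(1)] x x' by simp
    qed
    have "card (?B w) \<le> Suc 0" using card_le_Suc0_iff_eq[OF finB] eq by blast
    with finB show ?thesis by simp
  qed
  have "{x \<in> last ` P. j \<in> E_set ops x} \<subseteq> (\<Union>w\<in>\<sigma>. ?B w)"
    using assms(3) unfolding E_set_def subtree_def by auto
  then have "card {x \<in> last ` P. j \<in> E_set ops x} \<le> card (\<Union>w\<in>\<sigma>. ?B w)"
    using fin B by (intro card_mono) auto
  also have "\<dots> \<le> (\<Sum>w\<in>\<sigma>. card (?B w))"
    using fin by (rule card_UN_le)
  also have "\<dots> \<le> card \<sigma>"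
    using sum_mono[of \<sigma> "\<lambda>w. card (?B w)" "\<lambda>_. 1"] B by simp
  finally show ?thesis .
qed

lemma sum_card_E_set_le:
  assumes "independent_paths ops P"
  shows "(\<Sum>x\<in>last ` P. card (E_set ops x)) \<le> (tower_dim ops + 1) * num_incl ops"
proof -
  let ?J = "{j. j < length ops \<and> is_incl (ops ! j)}"
  have fin: "finite (last ` P)"
    using assms finite_endpoints[of P ops] by (simp add: independent_paths_def)
  have "E_set ops x = {j \<in> ?J. j \<in> E_set ops x}" for x
    by (auto simp: E_set_def is_incl_def)
  then have "(\<Sum>x\<in>last ` P. card (E_set ops x)) = (\<Sum>j\<in>?J. card {x \<in> last ` P. j \<in> E_set ops x})"
    using sum_multicount_gen[OF fin, of ?J "\<lambda>x j. j \<in> E_set ops x"] by simp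
  also have "\<dots> \<le> (\<Sum>j\<in>?J. tower_dim ops + 1)"
  proof (rule sum_mono)
    fix j assume "j \<in> ?J"
    then obtain \<sigma> where "j < length ops" "ops ! j = Incl \<sigma>" by (auto simp: is_incl_def)
    then show "card {x \<in> last ` P. j \<in> E_set ops x} \<le> tower_dim ops + 1"
      using card_endpoints_including_le[OF assms] card_included_le_tower_dim le_trans by blast
  qed
  also have "\<dots> = (tower_dim ops + 1) * num_incl ops"
    by (simp add: num_incl_def length_filter_conv_card)
  finally show ?thesis .
qed

lemma independent_paths_cost_le:
  assumes "independent_paths ops P"
  shows "(\<Sum>p\<in>P. path_cost ops p) \<le> 2 * (tower_dim ops + 1) * num_incl ops"
proof -
  have "\<forall>p\<in>P. asc_path ops p" "inj_on last P"
    using assms by (simp_all add: independent_paths_def)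
  then have "(\<Sum>p\<in>P. path_cost ops p) \<le> (\<Sum>p\<in>P. 2 * card (E_set ops (last p)))"
    using path_cost_le_card_E_set by (intro sum_mono) auto
  also have "\<dots> = 2 * (\<Sum>x\<in>last ` P. card (E_set ops x))"
    using sum.reindex[OF \<open>inj_on last P\<close>, of "\<lambda>x. card (E_set ops x)"] by (simp add: sum_distrib_left)
  also have "\<dots> \<le> 2 * (tower_dim ops + 1) * num_incl ops"
    using sum_card_E_set_le[OF assms] by simp
  finally show ?thesis .
qed

end

theorem lemma9:
  fixes ops :: "'v tower_op list"
  assumes "valid_tower ops"
  shows "(\<forall>xs. asc_path ops xs \<longrightarrow> path_cost ops xs \<le> 2 * card (E_set ops (last xs))) \<and>
         (\<forall>P. independent_paths ops P \<longrightarrow>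
              (\<Sum>p\<in>P. path_cost ops p) \<le> 2 * (tower_dim ops + 1) * num_incl ops)"
  using path_cost_le_card_E_set[OF assms] independent_paths_cost_le[OF assms] by blast

end
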